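(* Let $F\in\mathrm{Lip}_{\rm loc}(\mathbb{R})$ and suppose $F$ is linear (affine) on an interval $(a,b)\subset\mathbb{R}$ for some $a<b$. Then there exists an initial datum $g\in\mathrm{Lip}(\mathbb{R})$ and a constant $c_0>0$ depending only on $F$ and $g$ such that for every $\varepsilon\in(0,\tfrac14)$, \[ |u^\varepsilon(0,1)-u(0,1)|\ge c_0\sqrt{\varepsilon}, \] where $u^\varepsilon$ is the viscosity solution of $u^\varepsilon_t+F(u^\varepsilon_x)=\varepsilon u^\varepsilon_{xx}$ in $\mathbb{R}\times(0,\infty)$, $u^\varepsilon(\cdot,0)=g$, and $u$ is the viscosity solution of $u_t+F(u_x)=0$ in $\mathbb{R}\times(0,\infty)$, $u(\cdot,0)=g$. *)

theory Defs
  imports "HOL-Analysis.Analysis"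
begin

definition test_fun ::
  "(real \<times> real \<Rightarrow> real) \<Rightarrow> (real \<times> real \<Rightarrow> real) \<Rightarrow> (real \<times> real \<Rightarrow> real)
   \<Rightarrow> (real \<times> real \<Rightarrow> real) \<Rightarrow> bool" where
  "test_fun \<phi> \<phi>x \<phi>t \<phi>xx \<longleftrightarrow>
     (\<exists>\<phi>xt.
       (\<forall>p. (\<phi> has_derivative (\<lambda>(h,k). \<phi>x p * h + \<phi>t p * k)) (at p)) \<and>
       (\<forall>p. (\<phi>x has_derivative (\<lambda>(h,k). \<phi>xx p * h + \<phi>xt p * k)) (at p)) \<and>
       continuous_on UNIV \<phi>x \<and> continuous_on UNIV \<phi>t \<and>
       continuous_on UNIV \<phi>xx \<and> continuous_on UNIV \<phi>xt)"

text \<open>Solutions are taken in the standard uniqueness class: continuous on R x [0,infinity)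
  and uniformly continuous on R x [0,T] for every T > 0.\<close>

definition visc_solution ::
  "real \<Rightarrow> (real \<Rightarrow> real) \<Rightarrow> (real \<Rightarrow> real) \<Rightarrow> (real \<times> real \<Rightarrow> real) \<Rightarrow> bool" where
  "visc_solution \<epsilon> F g u \<longleftrightarrow>
     continuous_on (UNIV \<times> {0..}) u \<and>
     (\<forall>T>0. uniformly_continuous_on (UNIV \<times> {0..T}) u) \<and>
     (\<forall>x. u (x, 0) = g x) \<and>
     (\<forall>\<phi> \<phi>x \<phi>t \<phi>xx x0 t0. test_fun \<phi> \<phi>x \<phi>t \<phi>xx \<and> t0 > 0 \<longrightarrow>
        ((\<exists>r>0. \<forall>x t. t > 0 \<and> dist (x, t) (x0, t0) < r \<longrightarrow>
              u (x, t) - \<phi> (x, t) \<le> u (x0, t0) - \<phi> (x0, t0))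
          \<longrightarrow> \<phi>t (x0, t0) + F (\<phi>x (x0, t0)) - \<epsilon> * \<phi>xx (x0, t0) \<le> 0) \<and>
        ((\<exists>r>0. \<forall>x t. t > 0 \<and> dist (x, t) (x0, t0) < r \<longrightarrow>
              u (x, t) - \<phi> (x, t) \<ge> u (x0, t0) - \<phi> (x0, t0))
          \<longrightarrow> \<phi>t (x0, t0) + F (\<phi>x (x0, t0)) - \<epsilon> * \<phi>xx (x0, t0) \<ge> 0))"

definition locally_lipschitz :: "(real \<Rightarrow> real) \<Rightarrow> bool" where
  "locally_lipschitz F \<longleftrightarrow> (\<forall>R. \<exists>L. L-lipschitz_on {-R..R} F)"

end

theory Submission
  imports Defs
begin

(* Let alpha be the slope of F on (a,b), m the midpoint of (a,b) and delta = (b - a)/4, and take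
   the datum g x = m x + delta |x + alpha|, whose slopes m -+ delta lie in (a,b).  The kink of g
   travels with speed alpha and reaches x = 0 at t = 1.  Smoothing it at an arbitrary scale eta
   gives the strict supersolutions m x + (gamma - F m) t + delta sqrt ((x - alpha (t - 1))^2 + eta^2)
   of the inviscid equation, whence u (0, 1) <= - F m.  For the viscous equation the kink must be
   smoothed at scale sqrt eps:
     m x - (F m + gamma) t + delta sqrt ((x - alpha (t - 1))^2 + eps e^(t/2))
       - delta sqrt eps / 3 * (2 + e^(t/4))
   is a strict subsolution lying below g at t = 0, and at (0, 1) it exceeds - F m - gamma by
   2/3 delta (e^(1/4) - 1) sqrt eps.  Both comparisons are instances of one comparison principle
   between a viscosity subsolution and a smooth strict supersolution on a time strip, proved by
   penalizing with kappa sqrt (1 + x^2) + mu e^(M t). *)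

section \<open>Partial derivatives in space and time\<close>

definition has_partials :: "(real \<times> real \<Rightarrow> real) \<Rightarrow> real \<Rightarrow> real \<Rightarrow> real \<times> real \<Rightarrow> bool" where
  "has_partials f fx ft p \<longleftrightarrow> (f has_derivative (\<lambda>(h, k). fx * h + ft * k)) (at p)"

lemma has_partialsI:
  assumes "(f has_derivative L) (at p)" "\<And>h k. L (h, k) = fx * h + ft * k"
  shows "has_partials f fx ft p"
proof -
  have "L = (\<lambda>(h, k). fx * h + ft * k)"
    using assms(2) by (auto simp: fun_eq_iff)
  with assms(1) show ?thesis
    unfolding has_partials_def by simp
qed

lemma has_partials_eq_rhs:
  "has_partials f fx ft p \<Longrightarrow> fx = fx' \<Longrightarrow> ft = ft' \<Longrightarrow> has_partials f fx' ft' p"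
  by simp

lemma has_partials_fst: "has_partials fst 1 0 p"
  by (rule has_partialsI[OF has_derivative_fst[OF has_derivative_ident]]) simp

lemma has_partials_snd: "has_partials snd 0 1 p"
  by (rule has_partialsI[OF has_derivative_snd[OF has_derivative_ident]]) simp

lemma has_partials_const: "has_partials (\<lambda>q. c) 0 0 p"
  by (rule has_partialsI[OF has_derivative_const]) simp

lemma has_partials_add:
  "has_partials f fx ft p \<Longrightarrow> has_partials g gx gt p \<Longrightarrow>
    has_partials (\<lambda>q. f q + g q) (fx + gx) (ft + gt) p"
  unfolding has_partials_def
  by (rule has_partialsI[unfolded has_partials_def, OF has_derivative_add]) (auto simp: algebra_simps)

lemma has_partials_diff:
  "has_partials f fx ft p \<Longrightarrow> has_partials g gx gt p \<Longrightarrow>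
    has_partials (\<lambda>q. f q - g q) (fx - gx) (ft - gt) p"
  unfolding has_partials_def
  by (rule has_partialsI[unfolded has_partials_def, OF has_derivative_diff]) (auto simp: algebra_simps)

lemma has_partials_mult:
  "has_partials f fx ft p \<Longrightarrow> has_partials g gx gt p \<Longrightarrow>
    has_partials (\<lambda>q. f q * g q) (f p * gx + fx * g p) (f p * gt + ft * g p) p"
  unfolding has_partials_def
  by (rule has_partialsI[unfolded has_partials_def, OF has_derivative_mult]) (auto simp: algebra_simps)

lemma has_partials_divide:
  assumes "has_partials f fx ft p" "has_partials g gx gt p" "g p \<noteq> 0"
  shows "has_partials (\<lambda>q. f q / g q)
    ((fx * g p - f p * gx) / (g p * g p)) ((ft * g p - f p * gt) / (g p * g p)) p"
  using has_derivative_divide[OF assms(1,2)[unfolded has_partials_def] assms(3)]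
  by (rule has_partialsI) (use assms(3) in \<open>simp add: field_simps\<close>)

lemma has_partials_compose:
  assumes "(\<phi> has_real_derivative D) (at (f p))" "has_partials f fx ft p"
  shows "has_partials (\<lambda>q. \<phi> (f q)) (D * fx) (D * ft) p"
  using has_derivative_compose[OF assms(2)[unfolded has_partials_def]
      assms(1)[unfolded has_field_derivative_def]]
  by (rule has_partialsI) (simp add: algebra_simps)

lemmas has_partials_intros =
  has_partials_add has_partials_diff has_partials_mult has_partials_divide
  has_partials_fst has_partials_snd has_partials_const

lemma test_fun_iff:
  "test_fun \<phi> \<phi>x \<phi>t \<phi>xx \<longleftrightarrow>
     (\<exists>\<phi>xt. (\<forall>p. has_partials \<phi> (\<phi>x p) (\<phi>t p) p) \<and> (\<forall>p. has_partials \<phi>x (\<phi>xx p) (\<phi>xt p) p) \<and>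
       continuous_on UNIV \<phi>x \<and> continuous_on UNIV \<phi>t \<and>
       continuous_on UNIV \<phi>xx \<and> continuous_on UNIV \<phi>xt)"
  unfolding test_fun_def has_partials_def ..

lemma test_fun_continuous:
  assumes "test_fun \<phi> \<phi>x \<phi>t \<phi>xx"
  shows "continuous_on UNIV \<phi>"
  using assms unfolding test_fun_def
  by (meson continuous_at_imp_continuous_on has_derivative_continuous)

lemma test_fun_cong:
  assumes "test_fun \<phi> \<phi>x \<phi>t \<phi>xx" "\<And>p. \<phi> p = \<psi> p" "\<And>p. \<phi>x p = \<psi>x p" "\<And>p. \<phi>t p = \<psi>t p"
    "\<And>p. \<phi>xx p = \<psi>xx p"
  shows "test_fun \<psi> \<psi>x \<psi>t \<psi>xx"
proof -
  have "\<phi> = \<psi>" "\<phi>x = \<psi>x" "\<phi>t = \<psi>t" "\<phi>xx = \<psi>xx"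
    using assms(2-5) by auto
  with assms(1) show ?thesis
    by simp
qed

lemma test_fun_add:
  assumes "test_fun \<phi> \<phi>x \<phi>t \<phi>xx" "test_fun \<psi> \<psi>x \<psi>t \<psi>xx"
  shows "test_fun (\<lambda>p. \<phi> p + \<psi> p) (\<lambda>p. \<phi>x p + \<psi>x p) (\<lambda>p. \<phi>t p + \<psi>t p) (\<lambda>p. \<phi>xx p + \<psi>xx p)"
proof -
  obtain \<phi>xt \<psi>xt where
    "\<And>p. has_partials \<phi> (\<phi>x p) (\<phi>t p) p" "\<And>p. has_partials \<phi>x (\<phi>xx p) (\<phi>xt p) p"
    "\<And>p. has_partials \<psi> (\<psi>x p) (\<psi>t p) p" "\<And>p. has_partials \<psi>x (\<psi>xx p) (\<psi>xt p) p"
    "continuous_on UNIV \<phi>x" "continuous_on UNIV \<phi>t" "continuous_on UNIV \<phi>xx" "continuous_on UNIV \<phi>xt"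
    "continuous_on UNIV \<psi>x" "continuous_on UNIV \<psi>t" "continuous_on UNIV \<psi>xx" "continuous_on UNIV \<psi>xt"
    using assms unfolding test_fun_iff by blast
  then show ?thesis
    unfolding test_fun_iff
    by (intro exI[of _ "\<lambda>p. \<phi>xt p + \<psi>xt p"] conjI allI has_partials_add continuous_intros)
qed

lemma test_fun_cmult:
  assumes "test_fun \<phi> \<phi>x \<phi>t \<phi>xx"
  shows "test_fun (\<lambda>p. c * \<phi> p) (\<lambda>p. c * \<phi>x p) (\<lambda>p. c * \<phi>t p) (\<lambda>p. c * \<phi>xx p)"
proof -
  have cmult: "has_partials (\<lambda>q. c * f q) (c * fx) (c * ft) p" if "has_partials f fx ft p" for f fx ft p
    using has_partials_mult[OF has_partials_const that] by simp
  obtain \<phi>xt where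
    "\<And>p. has_partials \<phi> (\<phi>x p) (\<phi>t p) p" "\<And>p. has_partials \<phi>x (\<phi>xx p) (\<phi>xt p) p"
    "continuous_on UNIV \<phi>x" "continuous_on UNIV \<phi>t" "continuous_on UNIV \<phi>xx" "continuous_on UNIV \<phi>xt"
    using assms unfolding test_fun_iff by blast
  then show ?thesis
    unfolding test_fun_iff
    by (intro exI[of _ "\<lambda>p. c * \<phi>xt p"] conjI allI cmult continuous_intros)
qed

lemma test_fun_uminus:
  "test_fun \<phi> \<phi>x \<phi>t \<phi>xx \<Longrightarrow> test_fun (\<lambda>p. - \<phi> p) (\<lambda>p. - \<phi>x p) (\<lambda>p. - \<phi>t p) (\<lambda>p. - \<phi>xx p)"
  using test_fun_cmult[of \<phi> \<phi>x \<phi>t \<phi>xx "- 1"] by simp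

lemma test_fun_affine:
  "test_fun (\<lambda>p. m * fst p + B * snd p + C) (\<lambda>_. m) (\<lambda>_. B) (\<lambda>_. 0)"
  unfolding test_fun_iff
proof (intro exI[of _ "\<lambda>_. 0"] conjI allI continuous_intros)
  show "has_partials (\<lambda>p. m * fst p + B * snd p + C) m B p" for p
    by (rule has_partials_eq_rhs, (rule has_partials_intros)+) simp_all
qed (rule has_partials_const)

lemma test_fun_exp_time:
  "test_fun (\<lambda>p. c * exp (k * snd p)) (\<lambda>_. 0) (\<lambda>p. c * k * exp (k * snd p)) (\<lambda>_. 0)"
  unfolding test_fun_iff
proof (intro exI[of _ "\<lambda>_. 0"] conjI allI continuous_intros)
  show "has_partials (\<lambda>p. c * exp (k * snd p)) 0 (c * k * exp (k * snd p)) p" for p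
    by (rule has_partials_eq_rhs, (rule has_partials_intros has_partials_compose[OF DERIV_exp])+) simp_all
qed (rule has_partials_const)

section \<open>The smoothed cone\<close>

definition smooth_cone :: "real \<Rightarrow> real \<Rightarrow> real \<Rightarrow> real \<times> real \<Rightarrow> real" where
  "smooth_cone \<alpha> c k = (\<lambda>(x, t). sqrt ((x - \<alpha> * (t - 1))\<^sup>2 + c * exp (k * t)))"

lemma smooth_cone_pos: "c > 0 \<Longrightarrow> smooth_cone \<alpha> c k p > 0"
  by (cases p) (simp add: smooth_cone_def add_nonneg_pos)

lemma abs_le_smooth_cone: "c \<ge> 0 \<Longrightarrow> \<bar>x - \<alpha> * (t - 1)\<bar> \<le> smooth_cone \<alpha> c k (x, t)"
  unfolding smooth_cone_def by (simp add: real_le_rsqrt)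

lemma sqrt_le_smooth_cone: "c \<ge> 0 \<Longrightarrow> sqrt (c * exp (k * t)) \<le> smooth_cone \<alpha> c k (x, t)"
  unfolding smooth_cone_def by simp

lemma smooth_cone_le:
  "c \<ge> 0 \<Longrightarrow> smooth_cone \<alpha> c k (x, t) \<le> \<bar>x - \<alpha> * (t - 1)\<bar> + sqrt (c * exp (k * t))"
  unfolding smooth_cone_def
  using sqrt_sum_squares_le_sum_abs[of "x - \<alpha> * (t - 1)" "sqrt (c * exp (k * t))"] by simp

lemma smooth_cone_minus_abs_bounded:
  assumes "c \<ge> 0" "0 \<le> t" "t \<le> T"
  shows "\<bar>smooth_cone \<alpha> c k (x, t) - \<bar>x + \<alpha>\<bar>\<bar> \<le> \<bar>\<alpha>\<bar> * T + sqrt (c * exp (\<bar>k\<bar> * T))"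
proof -
  have "\<bar>\<bar>x - \<alpha> * (t - 1)\<bar> - \<bar>x + \<alpha>\<bar>\<bar> \<le> \<bar>\<alpha> * t\<bar>"
    using abs_triangle_ineq3[of "x - \<alpha> * (t - 1)" "x + \<alpha>"] by (simp add: algebra_simps)
  also have "\<dots> \<le> \<bar>\<alpha>\<bar> * T"
    using assms(2,3) by (simp add: abs_mult mult_left_mono)
  finally have Y: "\<bar>\<bar>x - \<alpha> * (t - 1)\<bar> - \<bar>x + \<alpha>\<bar>\<bar> \<le> \<bar>\<alpha>\<bar> * T" .
  have "k * t \<le> \<bar>k\<bar> * T"
    using assms(2,3) by (metis abs_ge_self abs_mult abs_of_nonneg mult_mono' abs_ge_zero order_trans)
  then have "sqrt (c * exp (k * t)) \<le> sqrt (c * exp (\<bar>k\<bar> * T))"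
    using assms(1) by (simp add: mult_left_mono)
  moreover have "\<bar>x - \<alpha> * (t - 1)\<bar> \<le> smooth_cone \<alpha> c k (x, t)"
    "smooth_cone \<alpha> c k (x, t) \<le> \<bar>x - \<alpha> * (t - 1)\<bar> + sqrt (c * exp (k * t))"
    using abs_le_smooth_cone smooth_cone_le assms(1) by blast+
  ultimately show ?thesis
    using Y real_sqrt_ge_zero[of "c * exp (\<bar>k\<bar> * T)"] assms(1)
    unfolding abs_le_iff by (intro conjI) linarith+
qed

definition smooth_cone_dx :: "real \<Rightarrow> real \<Rightarrow> real \<Rightarrow> real \<times> real \<Rightarrow> real" where
  "smooth_cone_dx \<alpha> c k p = (fst p - \<alpha> * (snd p - 1)) / smooth_cone \<alpha> c k p"

definition smooth_cone_dt :: "real \<Rightarrow> real \<Rightarrow> real \<Rightarrow> real \<times> real \<Rightarrow> real" where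
  "smooth_cone_dt \<alpha> c k p =
     c * k * exp (k * snd p) / (2 * smooth_cone \<alpha> c k p) - \<alpha> * smooth_cone_dx \<alpha> c k p"

definition smooth_cone_dxx :: "real \<Rightarrow> real \<Rightarrow> real \<Rightarrow> real \<times> real \<Rightarrow> real" where
  "smooth_cone_dxx \<alpha> c k p = c * exp (k * snd p) / smooth_cone \<alpha> c k p ^ 3"

lemma smooth_cone_eq: "smooth_cone \<alpha> c k p = sqrt ((fst p - \<alpha> * (snd p - 1))\<^sup>2 + c * exp (k * snd p))"
  by (simp add: smooth_cone_def case_prod_beta)

lemma continuous_on_smooth_cone: "continuous_on UNIV (smooth_cone \<alpha> c k)"
  unfolding smooth_cone_eq[abs_def] by (intro continuous_intros)

lemma has_partials_smooth_cone:
  assumes "c > 0"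
  shows "has_partials (smooth_cone \<alpha> c k) (smooth_cone_dx \<alpha> c k p) (smooth_cone_dt \<alpha> c k p) p"
proof -
  define Q where "Q q = (fst q - \<alpha> * (snd q - 1))\<^sup>2 + c * exp (k * snd q)" for q :: "real \<times> real"
  have "has_partials Q (2 * (fst p - \<alpha> * (snd p - 1))) (c * k * exp (k * snd p) - 2 * \<alpha> * (fst p - \<alpha> * (snd p - 1))) p"
    unfolding Q_def power2_eq_square
    by (rule has_partials_eq_rhs, (rule has_partials_intros has_partials_compose[OF DERIV_exp])+)
      (simp_all add: algebra_simps)
  moreover have "0 < Q p"
    using assms by (simp add: Q_def add_nonneg_pos)
  ultimately have sqrt_Q: "has_partials (\<lambda>q. sqrt (Q q))
      (inverse (sqrt (Q p)) / 2 * (2 * (fst p - \<alpha> * (snd p - 1))))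
      (inverse (sqrt (Q p)) / 2 * (c * k * exp (k * snd p) - 2 * \<alpha> * (fst p - \<alpha> * (snd p - 1)))) p"
    by (rule has_partials_compose[OF DERIV_real_sqrt, rotated])
  have R: "smooth_cone \<alpha> c k = (\<lambda>q. sqrt (Q q))"
    by (simp add: fun_eq_iff smooth_cone_eq Q_def)
  show ?thesis
    unfolding smooth_cone_dx_def smooth_cone_dt_def R
    by (rule has_partials_eq_rhs[OF sqrt_Q]) (use \<open>0 < Q p\<close> in \<open>simp_all add: field_simps\<close>)
qed

lemma has_partials_smooth_cone_dx:
  assumes "c > 0"
  shows "has_partials (smooth_cone_dx \<alpha> c k) (smooth_cone_dxx \<alpha> c k p)
    ((- \<alpha> - smooth_cone_dx \<alpha> c k p * smooth_cone_dt \<alpha> c k p) / smooth_cone \<alpha> c k p) p"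
proof -
  have "has_partials (\<lambda>q. fst q - \<alpha> * (snd q - 1)) 1 (- \<alpha>) p"
    by (rule has_partials_eq_rhs, (rule has_partials_intros)+) simp_all
  from has_partials_divide[OF this has_partials_smooth_cone[OF assms]] smooth_cone_pos[OF assms, of \<alpha> k p]
  have "has_partials (smooth_cone_dx \<alpha> c k)
      ((smooth_cone \<alpha> c k p - (fst p - \<alpha> * (snd p - 1)) * smooth_cone_dx \<alpha> c k p) / (smooth_cone \<alpha> c k p)\<^sup>2)
      ((- \<alpha> * smooth_cone \<alpha> c k p - (fst p - \<alpha> * (snd p - 1)) * smooth_cone_dt \<alpha> c k p) / (smooth_cone \<alpha> c k p)\<^sup>2) p"
    by (simp add: smooth_cone_dx_def[abs_def] power2_eq_square)
  moreover have "(smooth_cone \<alpha> c k p)\<^sup>2 = (fst p - \<alpha> * (snd p - 1))\<^sup>2 + c * exp (k * snd p)"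
    using assms by (simp add: smooth_cone_eq add_nonneg_pos)
  ultimately show ?thesis
    using smooth_cone_pos[OF assms, of \<alpha> k p]
    by (simp add: smooth_cone_dx_def smooth_cone_dxx_def field_simps power2_eq_square power3_eq_cube)
qed

lemma test_fun_smooth_cone:
  assumes "c > 0"
  shows "test_fun (smooth_cone \<alpha> c k) (smooth_cone_dx \<alpha> c k) (smooth_cone_dt \<alpha> c k) (smooth_cone_dxx \<alpha> c k)"
  unfolding test_fun_iff
proof (intro exI[of _ "\<lambda>p. (- \<alpha> - smooth_cone_dx \<alpha> c k p * smooth_cone_dt \<alpha> c k p) / smooth_cone \<alpha> c k p"]
    conjI allI has_partials_smooth_cone has_partials_smooth_cone_dx assms)
  have "\<forall>p\<in>UNIV. smooth_cone \<alpha> c k p \<noteq> 0"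
    using smooth_cone_pos[OF assms] by (simp add: less_imp_neq[symmetric])
  note nz = this continuous_on_smooth_cone
  show "continuous_on UNIV (smooth_cone_dx \<alpha> c k)"
    unfolding smooth_cone_dx_def[abs_def] using nz by (intro continuous_intros)
  then show "continuous_on UNIV (smooth_cone_dt \<alpha> c k)"
    unfolding smooth_cone_dt_def[abs_def] by (intro continuous_intros) (use nz in auto)
  show "continuous_on UNIV (smooth_cone_dxx \<alpha> c k)"
    unfolding smooth_cone_dxx_def[abs_def] using nz by (intro continuous_intros) simp_all
  show "continuous_on UNIV (\<lambda>p. (- \<alpha> - smooth_cone_dx \<alpha> c k p * smooth_cone_dt \<alpha> c k p) / smooth_cone \<alpha> c k p)"
    using nz \<open>continuous_on UNIV (smooth_cone_dx \<alpha> c k)\<close> \<open>continuous_on UNIV (smooth_cone_dt \<alpha> c k)\<close>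
    by (intro continuous_intros)
qed

lemma abs_smooth_cone_dx_le_1: "c > 0 \<Longrightarrow> \<bar>smooth_cone_dx \<alpha> c k p\<bar> \<le> 1"
  using abs_le_smooth_cone[of c "fst p" \<alpha> "snd p" k] smooth_cone_pos[of c \<alpha> k p]
  by (simp add: smooth_cone_dx_def divide_le_eq_1)

lemma smooth_cone_dxx_1_0_bounds: "0 < smooth_cone_dxx \<alpha> 1 0 p" "smooth_cone_dxx \<alpha> 1 0 p \<le> 1"
proof -
  have "1 \<le> smooth_cone \<alpha> 1 0 p"
    using sqrt_le_smooth_cone[of 1 0 "snd p" \<alpha> "fst p"] by simp
  then show "0 < smooth_cone_dxx \<alpha> 1 0 p" "smooth_cone_dxx \<alpha> 1 0 p \<le> 1"
    by (simp_all add: smooth_cone_dxx_def)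
qed

section \<open>Viscosity subsolutions and comparison\<close>

definition viscosity_subsolution ::
  "(real \<Rightarrow> real \<Rightarrow> real \<Rightarrow> real) \<Rightarrow> (real \<times> real \<Rightarrow> real) \<Rightarrow> bool" where
  "viscosity_subsolution H u \<longleftrightarrow>
     (\<forall>\<phi> \<phi>x \<phi>t \<phi>xx x0 t0. test_fun \<phi> \<phi>x \<phi>t \<phi>xx \<and> t0 > 0 \<and>
        (\<exists>r>0. \<forall>x t. t > 0 \<and> dist (x, t) (x0, t0) < r \<longrightarrow>
           u (x, t) - \<phi> (x, t) \<le> u (x0, t0) - \<phi> (x0, t0))
        \<longrightarrow> H (\<phi>t (x0, t0)) (\<phi>x (x0, t0)) (\<phi>xx (x0, t0)) \<le> 0)"

lemma viscosity_subsolutionD: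
  assumes "viscosity_subsolution H u" "test_fun \<phi> \<phi>x \<phi>t \<phi>xx" "t0 > 0"
    "\<exists>r>0. \<forall>x t. t > 0 \<and> dist (x, t) (x0, t0) < r \<longrightarrow> u (x, t) - \<phi> (x, t) \<le> u (x0, t0) - \<phi> (x0, t0)"
  shows "H (\<phi>t (x0, t0)) (\<phi>x (x0, t0)) (\<phi>xx (x0, t0)) \<le> 0"
proof -
  have "test_fun \<phi> \<phi>x \<phi>t \<phi>xx \<and> t0 > 0 \<and>
      (\<exists>r>0. \<forall>x t. t > 0 \<and> dist (x, t) (x0, t0) < r \<longrightarrow> u (x, t) - \<phi> (x, t) \<le> u (x0, t0) - \<phi> (x0, t0))
      \<longrightarrow> H (\<phi>t (x0, t0)) (\<phi>x (x0, t0)) (\<phi>xx (x0, t0)) \<le> 0"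
    using assms(1) unfolding viscosity_subsolution_def by (elim allE)
  with assms(2-4) show ?thesis
    by (elim mp) (intro conjI)
qed

lemma viscosity_subsolution_strip_maxD:
  assumes "viscosity_subsolution H u" "test_fun \<phi> \<phi>x \<phi>t \<phi>xx" "0 < t0" "t0 < T"
    and max: "\<And>q. q \<in> UNIV \<times> {0..<T} \<Longrightarrow> u q - \<phi> q \<le> u (x0, t0) - \<phi> (x0, t0)"
  shows "H (\<phi>t (x0, t0)) (\<phi>x (x0, t0)) (\<phi>xx (x0, t0)) \<le> 0"
proof (rule viscosity_subsolutionD[OF assms(1-3)])
  show "\<exists>r>0. \<forall>x t. t > 0 \<and> dist (x, t) (x0, t0) < r \<longrightarrow> u (x, t) - \<phi> (x, t) \<le> u (x0, t0) - \<phi> (x0, t0)"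
  proof (intro exI[of _ "T - t0"] conjI allI impI)
    fix x t
    assume "t > 0 \<and> dist (x, t) (x0, t0) < T - t0"
    moreover have "dist t t0 \<le> dist (x, t) (x0, t0)"
      using dist_snd_le[of "(x, t)" "(x0, t0)"] by simp
    ultimately have "(x, t) \<in> UNIV \<times> {0..<T}"
      by (auto simp: dist_real_def)
    then show "u (x, t) - \<phi> (x, t) \<le> u (x0, t0) - \<phi> (x0, t0)"
      by (rule max)
  qed (use assms(4) in simp)
qed

lemma visc_solutionD:
  assumes "visc_solution \<epsilon> F g u" "test_fun \<phi> \<phi>x \<phi>t \<phi>xx" "t0 > 0"
  shows "(\<exists>r>0. \<forall>x t. t > 0 \<and> dist (x, t) (x0, t0) < r \<longrightarrow>
            u (x, t) - \<phi> (x, t) \<le> u (x0, t0) - \<phi> (x0, t0))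
          \<longrightarrow> \<phi>t (x0, t0) + F (\<phi>x (x0, t0)) - \<epsilon> * \<phi>xx (x0, t0) \<le> 0"
    and "(\<exists>r>0. \<forall>x t. t > 0 \<and> dist (x, t) (x0, t0) < r \<longrightarrow>
            u (x, t) - \<phi> (x, t) \<ge> u (x0, t0) - \<phi> (x0, t0))
          \<longrightarrow> \<phi>t (x0, t0) + F (\<phi>x (x0, t0)) - \<epsilon> * \<phi>xx (x0, t0) \<ge> 0"
  using assms(1)[unfolded visc_solution_def, THEN conjunct2, THEN conjunct2, THEN conjunct2,
      THEN spec, THEN spec, THEN spec, THEN spec, THEN spec, THEN spec, of \<phi> \<phi>x \<phi>t \<phi>xx t0 x0,
      THEN mp, OF conjI[OF assms(2,3)]]
  by (rule conjunct1, rule conjunct2)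

lemma visc_solution_imp_subsolution:
  "visc_solution \<epsilon> F g u \<Longrightarrow> viscosity_subsolution (\<lambda>pt px pxx. pt + F px - \<epsilon> * pxx) u"
  unfolding viscosity_subsolution_def using visc_solutionD(1) by metis

lemma visc_solution_imp_uminus_subsolution:
  assumes "visc_solution \<epsilon> F g u"
  shows "viscosity_subsolution (\<lambda>pt px pxx. pt - F (- px) - \<epsilon> * pxx) (\<lambda>p. - u p)"
  unfolding viscosity_subsolution_def
proof (intro allI impI, elim conjE exE)
  fix \<phi> \<phi>x \<phi>t \<phi>xx x0 t0 r
  assume \<phi>: "test_fun \<phi> \<phi>x \<phi>t \<phi>xx" and "t0 > 0" "r > 0"
    and max: "\<forall>x t. t > 0 \<and> dist (x, t) (x0, t0) < r \<longrightarrow> - u (x, t) - \<phi> (x, t) \<le> - u (x0, t0) - \<phi> (x0, t0)"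
  have "\<exists>r>0. \<forall>x t. t > 0 \<and> dist (x, t) (x0, t0) < r \<longrightarrow>
      u (x, t) - - \<phi> (x, t) \<ge> u (x0, t0) - - \<phi> (x0, t0)"
  proof (intro exI[of _ r] conjI allI impI)
    fix x t
    assume "t > 0 \<and> dist (x, t) (x0, t0) < r"
    with max have "- u (x, t) - \<phi> (x, t) \<le> - u (x0, t0) - \<phi> (x0, t0)"
      by blast
    then show "u (x, t) - - \<phi> (x, t) \<ge> u (x0, t0) - - \<phi> (x0, t0)"
      by linarith
  qed (rule \<open>r > 0\<close>)
  then have "- \<phi>t (x0, t0) + F (- \<phi>x (x0, t0)) - \<epsilon> * - \<phi>xx (x0, t0) \<ge> 0"
    by (rule visc_solutionD(2)[OF assms test_fun_uminus[OF \<phi>] \<open>t0 > 0\<close>, rule_format])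
  then show "\<phi>t (x0, t0) - F (- \<phi>x (x0, t0)) - \<epsilon> * \<phi>xx (x0, t0) \<le> 0"
    by simp
qed

lemma uniformly_continuous_time_increment_bounded:
  fixes u :: "real \<times> real \<Rightarrow> real"
  assumes "uniformly_continuous_on (UNIV \<times> {0..T}) u"
  obtains C where "\<And>x t. 0 \<le> t \<Longrightarrow> t \<le> T \<Longrightarrow> \<bar>u (x, t) - u (x, 0)\<bar> \<le> C"
proof -
  obtain d where d: "d > 0" and close: "\<And>p q. p \<in> UNIV \<times> {0..T} \<Longrightarrow> q \<in> UNIV \<times> {0..T} \<Longrightarrow>
      dist q p < d \<Longrightarrow> dist (u q) (u p) < 1"
    using uniformly_continuous_onE[OF assms zero_less_one] by blast
  obtain N :: nat where N: "T / d < N"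
    using reals_Archimedean2 by blast
  have "\<bar>u (x, t) - u (x, 0)\<bar> \<le> N" if t: "0 \<le> t" "t \<le> T" for x t
  proof -
    have "0 \<le> T / d"
      using t d by simp
    with N have "N > 0"
      by simp
    define s where "s i = (x, i * t / N)" for i :: nat
    have in_strip: "s j \<in> UNIV \<times> {0..T}" if "j \<le> N" for j
    proof -
      have "real j * t \<le> real N * t"
        using that t by (simp add: mult_right_mono)
      then have "real j * t / N \<le> t"
        using \<open>N > 0\<close> by (simp add: divide_le_eq mult.commute)
      then show ?thesis
        using t by (simp add: s_def)
    qed
    have "dist (s (Suc i)) (s i) < d" for i
    proof -
      have "dist (s (Suc i)) (s i) = dist (t / N + i * t / N) (i * t / N)"
        by (simp add: s_def dist_Pair_Pair add_divide_distrib distrib_right)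
      also have "\<dots> = t / N"
        using t by (simp add: dist_real_def)
      also have "\<dots> < d"
        using N d \<open>N > 0\<close> t by (simp add: field_simps)
      finally show ?thesis .
    qed
    then have step: "\<bar>u (s (Suc i)) - u (s i)\<bar> \<le> 1" if "i < N" for i
      using close[OF in_strip in_strip, of i "Suc i"] that by (simp add: dist_real_def)
    have "u (x, t) - u (x, 0) = u (s N) - u (s 0)"
      using \<open>N > 0\<close> by (simp add: s_def)
    also have "\<dots> = (\<Sum>i<N. u (s (Suc i)) - u (s i))"
      by (rule sum_lessThan_telescope[symmetric])
    also have "\<bar>\<dots>\<bar> \<le> (\<Sum>i<N. \<bar>u (s (Suc i)) - u (s i)\<bar>)"
      by (rule sum_abs)
    also have "\<dots> \<le> N"
      using sum_mono[of "{..<N}" "\<lambda>i. \<bar>u (s (Suc i)) - u (s i)\<bar>" "\<lambda>_. 1"] step by simp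
    finally show ?thesis .
  qed
  then show ?thesis by (rule that)
qed

lemma visc_solution_deviation_bounded:
  assumes "visc_solution \<epsilon> F g u" "T > 0"
  obtains C where "\<And>x t. 0 \<le> t \<Longrightarrow> t \<le> T \<Longrightarrow> \<bar>u (x, t) - g x\<bar> \<le> C"
proof -
  have "uniformly_continuous_on (UNIV \<times> {0..T}) u" "\<And>x. u (x, 0) = g x"
    using assms unfolding visc_solution_def by auto
  then show ?thesis
    using uniformly_continuous_time_increment_bounded that by metis
qed

lemma attains_max_if_negative_off_compact:
  fixes f :: "'a::topological_space \<Rightarrow> real"
  assumes "compact K" "continuous_on K f" "p \<in> K" "f p > 0" "\<And>q. q \<in> S - K \<Longrightarrow> f q < 0"
  obtains p0 where "p0 \<in> K" "f p \<le> f p0" "\<And>q. q \<in> S \<Longrightarrow> f q \<le> f p0"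
proof -
  obtain p0 where p0: "p0 \<in> K" and max: "\<And>q. q \<in> K \<Longrightarrow> f q \<le> f p0"
    using continuous_attains_sup[OF assms(1) _ assms(2)] assms(3) by blast
  have "f q \<le> f p0" if "q \<in> S" for q
  proof (cases "q \<in> K")
    case False
    then have "f q < 0"
      using assms(5) that by blast
    with assms(4) max[OF assms(3)] show ?thesis
      by linarith
  qed (rule max)
  with p0 max[OF assms(3)] show ?thesis
    by (rule that)
qed

lemma exp_rate_exceeds:
  fixes A \<theta> \<tau> :: real
  assumes "0 < \<theta>" "0 < \<tau>"
  obtains M where "0 \<le> M" "A \<le> \<theta> * exp (M * \<tau>)"
proof
  define A' where "A' = max A 1 / \<theta>"
  have "A \<le> \<theta> * A'"
    using assms(1) by (simp add: A'_def)
  also have "\<dots> = \<theta> * exp (ln A')"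
    using assms(1) by (simp add: A'_def)
  also have "\<dots> \<le> \<theta> * exp (\<bar>ln A'\<bar> / \<tau> * \<tau>)"
    using assms by simp
  finally show "A \<le> \<theta> * exp (\<bar>ln A'\<bar> / \<tau> * \<tau>)" .
qed (use assms(2) in simp)

lemma test_fun_penalty:
  "test_fun (\<lambda>p. \<kappa> * smooth_cone 0 1 0 p + \<mu> * exp (M * snd p)) (\<lambda>p. \<kappa> * smooth_cone_dx 0 1 0 p)
     (\<lambda>p. \<mu> * M * exp (M * snd p)) (\<lambda>p. \<kappa> * smooth_cone_dxx 0 1 0 p)"
  by (rule test_fun_cong[OF test_fun_add[OF
        test_fun_cmult[where c = \<kappa>, OF test_fun_smooth_cone[of 1 0 0]] test_fun_exp_time[of \<mu> M]]])
    (simp_all add: smooth_cone_dt_def)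

lemma penalty_large_off_box:
  assumes "0 < \<kappa>" "0 < \<mu>" "0 \<le> M" "\<bar>B\<bar> + 1 \<le> \<kappa> * X" "\<bar>B\<bar> + 1 \<le> \<mu> * exp (M * T)"
    and "X < \<bar>x\<bar> \<or> T < t"
  shows "B < \<kappa> * smooth_cone 0 1 0 (x, t) + \<mu> * exp (M * t)"
proof -
  have "\<bar>x\<bar> \<le> smooth_cone 0 1 0 (x, t)"
    using abs_le_smooth_cone[of 1 x 0 t 0] by simp
  moreover have "0 < \<mu> * exp (M * t)"
    using assms(2) by simp
  ultimately have bounds: "\<kappa> * \<bar>x\<bar> \<le> \<kappa> * smooth_cone 0 1 0 (x, t)" "0 \<le> \<kappa> * \<bar>x\<bar>"
    "0 < \<mu> * exp (M * t)"
    using assms(1) by (simp_all add: mult_left_mono)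
  from assms(6) show ?thesis
  proof
    assume "X < \<bar>x\<bar>"
    then have "\<kappa> * X < \<kappa> * \<bar>x\<bar>"
      using assms(1) by simp
    with assms(4) bounds show ?thesis
      by linarith
  next
    assume "T < t"
    then have "\<mu> * exp (M * T) \<le> \<mu> * exp (M * t)"
      using assms(2,3) by (simp add: mult_left_mono)
    with assms(5) bounds show ?thesis
      by linarith
  qed
qed

lemma strict_supersolution_not_touched:
  assumes u_sub: "viscosity_subsolution H u"
    and w\<pi>: "test_fun (\<lambda>p. w p + \<pi> p) (\<lambda>p. wx p + \<pi>x p) (\<lambda>p. wt p + \<pi>t p) (\<lambda>p. wxx p + \<pi>xx p)"
    and strict: "\<And>p d e s. 0 < snd p \<Longrightarrow> snd p < T \<Longrightarrow> \<bar>d\<bar> \<le> \<rho> \<Longrightarrow> \<bar>e\<bar> \<le> \<rho> \<Longrightarrow> 0 \<le> s \<Longrightarrow>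
        H (wt p + s) (wx p + d) (wxx p + e) > 0"
    and "0 < t0" "t0 < T" "\<bar>\<pi>x (x0, t0)\<bar> \<le> \<rho>" "\<bar>\<pi>xx (x0, t0)\<bar> \<le> \<rho>" "0 \<le> \<pi>t (x0, t0)"
    and max: "\<And>q. q \<in> UNIV \<times> {0..<T} \<Longrightarrow> u q - (w q + \<pi> q) \<le> u (x0, t0) - (w (x0, t0) + \<pi> (x0, t0))"
  shows False
proof -
  have "H (wt (x0, t0) + \<pi>t (x0, t0)) (wx (x0, t0) + \<pi>x (x0, t0)) (wxx (x0, t0) + \<pi>xx (x0, t0)) \<le> 0"
    by (rule viscosity_subsolution_strip_maxD[OF u_sub w\<pi> \<open>0 < t0\<close> \<open>t0 < T\<close> max])
  moreover have "H (wt (x0, t0) + \<pi>t (x0, t0)) (wx (x0, t0) + \<pi>x (x0, t0)) (wxx (x0, t0) + \<pi>xx (x0, t0)) > 0"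
    by (rule strict) (use assms(4-8) in simp_all)
  ultimately show False
    by simp
qed

lemma comparison_with_strict_supersolution:
  fixes u w wx wt wxx :: "real \<times> real \<Rightarrow> real" and H :: "real \<Rightarrow> real \<Rightarrow> real \<Rightarrow> real"
  assumes u_cont: "continuous_on (UNIV \<times> {0..}) u"
    and u_sub: "viscosity_subsolution H u"
    and w: "test_fun w wx wt wxx"
    and "\<rho> > 0"
    and strict: "\<And>p d e s. 0 < snd p \<Longrightarrow> snd p < T \<Longrightarrow> \<bar>d\<bar> \<le> \<rho> \<Longrightarrow> \<bar>e\<bar> \<le> \<rho> \<Longrightarrow> 0 \<le> s \<Longrightarrow>
        H (wt p + s) (wx p + d) (wxx p + e) > 0"
    and initial: "\<And>x. u (x, 0) \<le> w (x, 0)"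
    and bounded: "\<And>x t. 0 \<le> t \<Longrightarrow> t < T \<Longrightarrow> u (x, t) - w (x, t) \<le> B"
    and t1: "0 < t1" "t1 < T"
  shows "u (x1, t1) \<le> w (x1, t1)"
proof (rule ccontr)
  assume "\<not> u (x1, t1) \<le> w (x1, t1)"
  define \<theta> where "\<theta> = u (x1, t1) - w (x1, t1)"
  have \<theta>: "\<theta> > 0"
    using \<open>\<not> u (x1, t1) \<le> w (x1, t1)\<close> by (simp add: \<theta>_def)
  define C where "C = smooth_cone 0 1 0"
  have C_pos: "C p > 0" for p
    unfolding C_def by (rule smooth_cone_pos) simp
  define \<kappa> where "\<kappa> = min \<rho> (\<theta> / (4 * C (x1, t1)))"
  have \<kappa>: "0 < \<kappa>" "\<kappa> \<le> \<rho>" "\<kappa> * C (x1, t1) \<le> \<theta> / 4"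
    using \<open>\<rho> > 0\<close> \<theta> C_pos[of "(x1, t1)"] by (auto simp: \<kappa>_def min_def field_simps)
  define \<tau> where "\<tau> = (T - t1) / 2"
  have \<tau>: "\<tau> > 0" "t1 + \<tau> < T"
    using t1 by (simp_all add: \<tau>_def field_simps)
  obtain M where "0 \<le> M" and M: "\<bar>B\<bar> + 1 \<le> \<theta> / 4 * exp (M * \<tau>)"
    using exp_rate_exceeds[where A = "\<bar>B\<bar> + 1" and \<theta> = "\<theta> / 4" and \<tau> = \<tau>] \<theta> \<tau> by auto
  define \<mu> where "\<mu> = \<theta> / 4 * exp (- M * t1)"
  have \<mu>: "\<mu> * exp (M * t) = \<theta> / 4 * exp (M * (t - t1))" for t
    by (simp add: \<mu>_def exp_diff exp_minus field_simps)
  (* u - (w + pi) is positive at (x1, t1) but negative outside a compact box of the strip, so it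
     attains an interior maximum, where w + pi would touch u from above. *)
  define \<pi> where "\<pi> p = \<kappa> * C p + \<mu> * exp (M * snd p)" for p :: "real \<times> real"
  have w\<pi>: "test_fun (\<lambda>p. w p + \<pi> p) (\<lambda>p. wx p + \<kappa> * smooth_cone_dx 0 1 0 p)
      (\<lambda>p. wt p + \<mu> * M * exp (M * snd p)) (\<lambda>p. wxx p + \<kappa> * smooth_cone_dxx 0 1 0 p)"
    unfolding \<pi>_def C_def by (rule test_fun_add[OF w test_fun_penalty])
  define \<Phi> where "\<Phi> p = u p - (w p + \<pi> p)" for p
  define X where "X = max \<bar>x1\<bar> ((\<bar>B\<bar> + 1) / \<kappa>)"
  define K where "K = {-X..X} \<times> {0..t1 + \<tau>}"
  have "\<Phi> (x, t) < 0" if "(x, t) \<in> UNIV \<times> {0..<T} - K" for x t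
  proof -
    have "0 < \<mu>"
      using \<theta> by (simp add: \<mu>_def)
    have "(\<bar>B\<bar> + 1) / \<kappa> \<le> X"
      by (simp add: X_def)
    then have X: "\<bar>B\<bar> + 1 \<le> \<kappa> * X"
      using \<kappa>(1) by (simp add: divide_le_eq mult.commute)
    have T: "\<bar>B\<bar> + 1 \<le> \<mu> * exp (M * (t1 + \<tau>))"
      using M by (simp add: \<mu>)
    have "X < \<bar>x\<bar> \<or> t1 + \<tau> < t" "0 \<le> t" "t < T"
      using that by (auto simp: K_def abs_le_iff)
    then have "B < \<pi> (x, t)"
      using penalty_large_off_box[OF \<kappa>(1) \<open>0 < \<mu>\<close> \<open>0 \<le> M\<close> X T, where x = x and t = t]
      by (simp add: \<pi>_def C_def)
    with bounded[of t x] \<open>0 \<le> t\<close> \<open>t < T\<close> show ?thesis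
      by (simp add: \<Phi>_def)
  qed
  moreover have "continuous_on K \<Phi>"
  proof -
    have "continuous_on K u"
      by (rule continuous_on_subset[OF u_cont]) (auto simp: K_def)
    moreover have "continuous_on K (\<lambda>p. w p + \<pi> p)"
      by (rule continuous_on_subset[OF test_fun_continuous[OF w\<pi>]]) simp
    ultimately show ?thesis
      unfolding \<Phi>_def[abs_def] by (rule continuous_on_diff)
  qed
  moreover have "(x1, t1) \<in> K"
  proof -
    have "\<bar>x1\<bar> \<le> X"
      by (simp add: X_def)
    with t1 \<tau> show ?thesis
      by (simp add: K_def abs_le_iff)
  qed
  moreover have "\<Phi> (x1, t1) > 0"
  proof -
    have "\<Phi> (x1, t1) = \<theta> - \<kappa> * C (x1, t1) - \<theta> / 4"
      using \<mu>[of t1] by (simp add: \<Phi>_def \<pi>_def \<theta>_def)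
    with \<kappa>(3) \<theta> show ?thesis
      by linarith
  qed
  moreover have "compact K"
    by (simp add: K_def compact_Times)
  ultimately obtain x0 t0 where p0: "(x0, t0) \<in> K" "\<Phi> (x1, t1) \<le> \<Phi> (x0, t0)"
    and max: "\<And>q. q \<in> UNIV \<times> {0..<T} \<Longrightarrow> \<Phi> q \<le> \<Phi> (x0, t0)"
    by (metis attains_max_if_negative_off_compact surj_pair)
  have "\<pi> (x0, 0) > 0"
    using \<kappa>(1) C_pos[of "(x0, 0)"] \<theta> by (simp add: \<pi>_def \<mu>_def add_pos_pos)
  then have "t0 \<noteq> 0"
    using p0(2) \<open>\<Phi> (x1, t1) > 0\<close> initial[of x0] by (auto simp: \<Phi>_def)
  then have t0: "0 < t0" "t0 < T"
    using p0(1) \<tau> by (auto simp: K_def)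
  show False
  proof (rule strict_supersolution_not_touched[OF u_sub w\<pi> strict t0])
    have "\<kappa> * \<bar>smooth_cone_dx 0 1 0 (x0, t0)\<bar> \<le> \<kappa>"
      using abs_smooth_cone_dx_le_1[of 1 0 0 "(x0, t0)"] \<kappa>(1) by (simp add: mult_left_le)
    moreover have "\<bar>\<kappa> * smooth_cone_dx 0 1 0 (x0, t0)\<bar> = \<kappa> * \<bar>smooth_cone_dx 0 1 0 (x0, t0)\<bar>"
      using \<kappa>(1) by (simp add: abs_mult)
    ultimately show "\<bar>\<kappa> * smooth_cone_dx 0 1 0 (x0, t0)\<bar> \<le> \<rho>"
      using \<kappa>(2) by linarith
    have "\<kappa> * smooth_cone_dxx 0 1 0 (x0, t0) \<le> \<kappa>"
      using smooth_cone_dxx_1_0_bounds(2)[of 0 "(x0, t0)"] \<kappa>(1) by (simp add: mult_left_le)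
    moreover have "\<bar>\<kappa> * smooth_cone_dxx 0 1 0 (x0, t0)\<bar> = \<kappa> * smooth_cone_dxx 0 1 0 (x0, t0)"
      using \<kappa>(1) smooth_cone_dxx_1_0_bounds(1)[of 0 "(x0, t0)"] by (simp add: abs_mult)
    ultimately show "\<bar>\<kappa> * smooth_cone_dxx 0 1 0 (x0, t0)\<bar> \<le> \<rho>"
      using \<kappa>(2) by linarith
    show "0 \<le> \<mu> * M * exp (M * snd (x0, t0))"
      using \<theta> \<open>0 \<le> M\<close> by (simp add: \<mu>_def)
    show "u q - (w q + \<pi> q) \<le> u (x0, t0) - (w (x0, t0) + \<pi> (x0, t0))" if "q \<in> UNIV \<times> {0..<T}" for q
      using max[OF that] by (simp add: \<Phi>_def)
  qed
qed

section \<open>Barriers\<close>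

lemma affine_at_perturbed_slope:
  fixes F :: "real \<Rightarrow> real"
  assumes lin: "\<forall>p\<in>{m - 2 * \<delta><..<m + 2 * \<delta>}. F p = \<alpha> * p + \<beta>"
    and "\<bar>q\<bar> \<le> 1" "\<bar>d\<bar> < \<delta>"
  shows "F (m + \<delta> * q + d) = F m + \<alpha> * (\<delta> * q + d)"
proof -
  have "\<delta> > 0"
    using assms(3) by linarith
  then have "\<bar>\<delta> * q\<bar> \<le> \<delta>"
    using assms(2) by (simp add: abs_mult mult_left_le)
  with assms(3) have "m + \<delta> * q + d \<in> {m - 2 * \<delta><..<m + 2 * \<delta>}"
    unfolding greaterThanLessThan_iff abs_le_iff abs_less_iff by (intro conjI) linarith+
  moreover have "m \<in> {m - 2 * \<delta><..<m + 2 * \<delta>}"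
    using \<open>\<delta> > 0\<close> by simp
  ultimately show ?thesis
    using lin by (simp add: algebra_simps)
qed

lemma small_perturbation_bound:
  fixes \<delta> \<gamma> A :: real
  assumes "0 < \<delta>" "0 < \<gamma>" "0 \<le> A"
  obtains \<rho> where "0 < \<rho>" "\<rho> < \<delta>" "A * \<rho> < \<gamma>"
proof
  define \<rho> where "\<rho> = min (\<delta> / 2) (\<gamma> / (2 * (A + 1)))"
  show "0 < \<rho>" "\<rho> < \<delta>"
    using assms by (simp_all add: \<rho>_def)
  have "\<rho> \<le> \<gamma> / (2 * (A + 1))"
    by (simp add: \<rho>_def)
  then have "2 * (A * \<rho>) + 2 * \<rho> \<le> \<gamma>"
    using assms(3) by (simp add: le_divide_eq algebra_simps)
  moreover have "0 \<le> A * \<rho>"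
    using assms(3) \<open>0 < \<rho>\<close> by simp
  ultimately show "A * \<rho> < \<gamma>"
    using \<open>0 < \<rho>\<close> by linarith
qed

definition upper_barrier :: "real \<Rightarrow> real \<Rightarrow> real \<Rightarrow> real \<Rightarrow> real \<Rightarrow> real \<times> real \<Rightarrow> real" where
  "upper_barrier m b \<delta> \<alpha> \<eta> p = m * fst p + b * snd p + \<delta> * smooth_cone \<alpha> (\<eta>\<^sup>2) 0 p"

lemma test_fun_upper_barrier:
  assumes "\<eta> > 0"
  shows "test_fun (upper_barrier m b \<delta> \<alpha> \<eta>) (\<lambda>p. m + \<delta> * smooth_cone_dx \<alpha> (\<eta>\<^sup>2) 0 p)
    (\<lambda>p. b + \<delta> * smooth_cone_dt \<alpha> (\<eta>\<^sup>2) 0 p) (\<lambda>p. \<delta> * smooth_cone_dxx \<alpha> (\<eta>\<^sup>2) 0 p)"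
  by (rule test_fun_cong[OF test_fun_add[OF test_fun_affine[of m b 0]
        test_fun_cmult[where c = \<delta>, OF test_fun_smooth_cone[of "\<eta>\<^sup>2" \<alpha> 0]]]])
    (use assms in \<open>simp_all add: upper_barrier_def\<close>)

lemma upper_barrier_initial_ge:
  "\<delta> \<ge> 0 \<Longrightarrow> m * x + \<delta> * \<bar>x + \<alpha>\<bar> \<le> upper_barrier m b \<delta> \<alpha> \<eta> (x, 0)"
  using abs_le_smooth_cone[of "\<eta>\<^sup>2" x \<alpha> 0 0] by (simp add: upper_barrier_def mult_left_mono)

lemma upper_barrier_deviation_bounded:
  assumes "\<delta> \<ge> 0" "\<eta> \<ge> 0" "0 \<le> t" "t \<le> 2"
  shows "m * x + \<delta> * \<bar>x + \<alpha>\<bar> - upper_barrier m b \<delta> \<alpha> \<eta> (x, t) \<le> 2 * \<bar>b\<bar> + \<delta> * (2 * \<bar>\<alpha>\<bar> + \<eta>)"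
proof -
  have "\<bar>smooth_cone \<alpha> (\<eta>\<^sup>2) 0 (x, t) - \<bar>x + \<alpha>\<bar>\<bar> \<le> 2 * \<bar>\<alpha>\<bar> + \<eta>"
    using smooth_cone_minus_abs_bounded[of "\<eta>\<^sup>2" t 2 \<alpha> 0 x] assms by (simp add: mult.commute)
  then have "\<bar>\<delta> * (smooth_cone \<alpha> (\<eta>\<^sup>2) 0 (x, t) - \<bar>x + \<alpha>\<bar>)\<bar> \<le> \<delta> * (2 * \<bar>\<alpha>\<bar> + \<eta>)"
    using assms(1) by (simp add: abs_mult mult_left_mono)
  moreover have "\<bar>b * t\<bar> \<le> 2 * \<bar>b\<bar>"
    using mult_left_mono[of t 2 "\<bar>b\<bar>"] assms(3,4) by (simp add: abs_mult mult.commute)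
  ultimately show ?thesis
    unfolding upper_barrier_def abs_le_iff by (simp add: algebra_simps)
qed

lemma inviscid_solution_le_upper_barrier:
  assumes lin: "\<forall>p\<in>{m - 2 * \<delta><..<m + 2 * \<delta>}. F p = \<alpha> * p + \<beta>"
    and sol: "visc_solution 0 F (\<lambda>x. m * x + \<delta> * \<bar>x + \<alpha>\<bar>) u"
    and "\<delta> > 0" "\<gamma> > 0" "\<eta> > 0"
  shows "u (0, 1) \<le> upper_barrier m (\<gamma> - F m) \<delta> \<alpha> \<eta> (0, 1)"
proof -
  obtain \<rho> where \<rho>: "0 < \<rho>" "\<rho> < \<delta>" "\<bar>\<alpha>\<bar> * \<rho> < \<gamma>"
    using small_perturbation_bound[OF \<open>\<delta> > 0\<close> \<open>\<gamma> > 0\<close> abs_ge_zero] by blast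
  obtain C where C: "\<And>x t. 0 \<le> t \<Longrightarrow> t \<le> 2 \<Longrightarrow> \<bar>u (x, t) - (m * x + \<delta> * \<bar>x + \<alpha>\<bar>)\<bar> \<le> C"
    using visc_solution_deviation_bounded[OF sol, of 2] by auto
  show ?thesis
  proof (rule comparison_with_strict_supersolution[OF _ visc_solution_imp_subsolution[OF sol]
        test_fun_upper_barrier[OF \<open>\<eta> > 0\<close>] \<open>\<rho> > 0\<close>,
        where T = 2 and B = "C + 2 * \<bar>\<gamma> - F m\<bar> + \<delta> * (2 * \<bar>\<alpha>\<bar> + \<eta>)"])
    show "continuous_on (UNIV \<times> {0..}) u"
      using sol by (simp add: visc_solution_def)
  next
    fix p :: "real \<times> real" and d e s :: real
    assume "0 < snd p" "snd p < 2" "\<bar>d\<bar> \<le> \<rho>" "\<bar>e\<bar> \<le> \<rho>" "0 \<le> s"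
    define q where "q = smooth_cone_dx \<alpha> (\<eta>\<^sup>2) 0 p"
    have "\<bar>q\<bar> \<le> 1"
      using abs_smooth_cone_dx_le_1 \<open>\<eta> > 0\<close> by (simp add: q_def)
    then have "F (m + \<delta> * q + d) = F m + \<alpha> * (\<delta> * q + d)"
      using affine_at_perturbed_slope[OF lin] \<rho> \<open>\<bar>d\<bar> \<le> \<rho>\<close> by simp
    moreover have "\<bar>\<alpha> * d\<bar> < \<gamma>"
      using mult_left_mono[OF \<open>\<bar>d\<bar> \<le> \<rho>\<close> abs_ge_zero[of \<alpha>]] \<rho>(3) by (simp add: abs_mult)
    ultimately show "0 < \<gamma> - F m + \<delta> * smooth_cone_dt \<alpha> (\<eta>\<^sup>2) 0 p + s
        + F (m + \<delta> * smooth_cone_dx \<alpha> (\<eta>\<^sup>2) 0 p + d) - 0 * (\<delta> * smooth_cone_dxx \<alpha> (\<eta>\<^sup>2) 0 p + e)"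
      using \<open>0 \<le> s\<close> by (simp add: smooth_cone_dt_def q_def[symmetric] algebra_simps abs_less_iff)
  next
    fix x
    have "u (x, 0) = m * x + \<delta> * \<bar>x + \<alpha>\<bar>"
      using sol by (simp add: visc_solution_def)
    with upper_barrier_initial_ge[of \<delta> m x \<alpha> "\<gamma> - F m" \<eta>] \<open>\<delta> > 0\<close>
    show "u (x, 0) \<le> upper_barrier m (\<gamma> - F m) \<delta> \<alpha> \<eta> (x, 0)"
      by simp
  next
    fix x t :: real
    assume "0 \<le> t" "t < 2"
    with C[of t x] upper_barrier_deviation_bounded[of \<delta> \<eta> t m x \<alpha> "\<gamma> - F m"] \<open>\<delta> > 0\<close> \<open>\<eta> > 0\<close>
    show "u (x, t) - upper_barrier m (\<gamma> - F m) \<delta> \<alpha> \<eta> (x, t) \<le> C + 2 * \<bar>\<gamma> - F m\<bar> + \<delta> * (2 * \<bar>\<alpha>\<bar> + \<eta>)"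
      by (simp add: abs_le_iff)
  qed simp_all
qed

lemma inviscid_solution_upper_bound:
  assumes "\<forall>p\<in>{m - 2 * \<delta><..<m + 2 * \<delta>}. F p = \<alpha> * p + \<beta>"
    and "visc_solution 0 F (\<lambda>x. m * x + \<delta> * \<bar>x + \<alpha>\<bar>) u" "\<delta> > 0"
  shows "u (0, 1) \<le> - F m"
proof (rule field_le_epsilon)
  fix e :: real
  assume "e > 0"
  then have "u (0, 1) \<le> upper_barrier m (e / 2 - F m) \<delta> \<alpha> (e / (2 * \<delta>)) (0, 1)"
    using assms by (intro inviscid_solution_le_upper_barrier[OF assms(1,2)]) simp_all
  also have "\<dots> = - F m + e"
    using \<open>e > 0\<close> \<open>\<delta> > 0\<close> by (simp add: upper_barrier_def smooth_cone_def)
  finally show "u (0, 1) \<le> - F m + e" .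
qed

lemma viscous_barrier_inequality:
  fixes \<sigma> R \<epsilon> :: real
  assumes "0 < \<sigma>" "0 < R" "\<sigma>\<^sup>2 \<le> 3 * \<epsilon>"
  shows "\<sigma>\<^sup>2 / (4 * R) - \<sigma> / 12 - \<epsilon> * \<sigma>\<^sup>2 / R ^ 3 \<le> 0"
proof -
  have "12 * R ^ 3 * (\<sigma>\<^sup>2 / (4 * R) - \<sigma> / 12 - \<epsilon> * \<sigma>\<^sup>2 / R ^ 3)
      = 3 * \<sigma>\<^sup>2 * R\<^sup>2 - \<sigma> * R ^ 3 - 12 * \<epsilon> * \<sigma>\<^sup>2"
    using assms(2) by (simp add: field_simps power2_eq_square power3_eq_cube)
  also have "\<dots> \<le> 3 * \<sigma>\<^sup>2 * R\<^sup>2 - \<sigma> * R ^ 3 - 4 * \<sigma>\<^sup>2 * \<sigma>\<^sup>2"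
    using mult_left_mono[OF assms(3), of "4 * \<sigma>\<^sup>2"] by simp
  also have "\<dots> = - \<sigma> * (R - 2 * \<sigma>)\<^sup>2 * (R + \<sigma>)"
    by (simp add: algebra_simps power2_eq_square power3_eq_cube)
  also have "\<dots> \<le> 0"
    using assms(1,2) by simp
  finally show ?thesis
    using assms(2) by (simp add: mult_le_0_iff)
qed

lemma smooth_cone_viscous_subsolution:
  assumes "\<epsilon> > 0" "snd p < 2"
  shows "smooth_cone_dt \<alpha> \<epsilon> (1 / 2) p + \<alpha> * smooth_cone_dx \<alpha> \<epsilon> (1 / 2) p
    - sqrt \<epsilon> / 12 * exp (snd p / 4) - \<epsilon> * smooth_cone_dxx \<alpha> \<epsilon> (1 / 2) p \<le> 0"
proof -
  define R where "R = smooth_cone \<alpha> \<epsilon> (1 / 2) p"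
  define \<sigma> where "\<sigma> = sqrt \<epsilon> * exp (snd p / 4)"
  have "R > 0" "\<sigma> > 0"
    using smooth_cone_pos assms(1) by (simp_all add: R_def \<sigma>_def)
  have "exp (snd p / 4) ^ 2 = exp (1 / 2 * snd p)"
    by (simp add: power2_eq_square flip: exp_add)
  then have \<sigma>_sq: "\<sigma>\<^sup>2 = \<epsilon> * exp (1 / 2 * snd p)"
    using assms(1) by (simp add: \<sigma>_def power_mult_distrib)
  have "exp (1 / 2 * snd p) \<le> exp 1"
    using assms(2) by simp
  also have "\<dots> \<le> 3"
    by (rule exp_le)
  finally have "\<sigma>\<^sup>2 \<le> 3 * \<epsilon>"
    using assms(1) by (simp add: \<sigma>_sq)
  moreover have "smooth_cone_dt \<alpha> \<epsilon> (1 / 2) p = \<sigma>\<^sup>2 / (4 * R) - \<alpha> * smooth_cone_dx \<alpha> \<epsilon> (1 / 2) p"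
    by (simp add: smooth_cone_dt_def \<sigma>_sq R_def)
  moreover have "smooth_cone_dxx \<alpha> \<epsilon> (1 / 2) p = \<sigma>\<^sup>2 / R ^ 3"
    by (simp add: smooth_cone_dxx_def \<sigma>_sq R_def)
  moreover have "sqrt \<epsilon> / 12 * exp (snd p / 4) = \<sigma> / 12"
    by (simp add: \<sigma>_def)
  ultimately show ?thesis
    using viscous_barrier_inequality[OF \<open>\<sigma> > 0\<close> \<open>R > 0\<close>] by simp
qed

definition lower_barrier :: "real \<Rightarrow> real \<Rightarrow> real \<Rightarrow> real \<Rightarrow> real \<Rightarrow> real \<times> real \<Rightarrow> real" where
  "lower_barrier m b \<delta> \<alpha> \<epsilon> p = m * fst p + b * snd p + \<delta> * smooth_cone \<alpha> \<epsilon> (1 / 2) p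
     - \<delta> * sqrt \<epsilon> / 3 * (2 + exp (snd p / 4))"

lemma test_fun_lower_barrier:
  assumes "\<epsilon> > 0"
  shows "test_fun (lower_barrier m b \<delta> \<alpha> \<epsilon>) (\<lambda>p. m + \<delta> * smooth_cone_dx \<alpha> \<epsilon> (1 / 2) p)
    (\<lambda>p. b + \<delta> * smooth_cone_dt \<alpha> \<epsilon> (1 / 2) p - \<delta> * sqrt \<epsilon> / 12 * exp (snd p / 4))
    (\<lambda>p. \<delta> * smooth_cone_dxx \<alpha> \<epsilon> (1 / 2) p)"
  by (rule test_fun_cong[OF test_fun_add[OF test_fun_add[OF test_fun_affine[of m b "- 2 * \<delta> * sqrt \<epsilon> / 3"]
        test_fun_cmult[where c = \<delta>, OF test_fun_smooth_cone[of \<epsilon> \<alpha> "1 / 2"]]]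
        test_fun_exp_time[of "- \<delta> * sqrt \<epsilon> / 3" "1 / 4"]]])
    (use assms in \<open>simp_all add: lower_barrier_def algebra_simps\<close>)

lemma lower_barrier_initial_le:
  assumes "\<delta> \<ge> 0" "\<epsilon> \<ge> 0"
  shows "lower_barrier m b \<delta> \<alpha> \<epsilon> (x, 0) \<le> m * x + \<delta> * \<bar>x + \<alpha>\<bar>"
proof -
  have "smooth_cone \<alpha> \<epsilon> (1 / 2) (x, 0) \<le> \<bar>x + \<alpha>\<bar> + sqrt \<epsilon>"
    using smooth_cone_le[of \<epsilon> \<alpha> "1 / 2" x 0] assms(2) by simp
  then have "\<delta> * smooth_cone \<alpha> \<epsilon> (1 / 2) (x, 0) \<le> \<delta> * (\<bar>x + \<alpha>\<bar> + sqrt \<epsilon>)"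
    using assms(1) by (rule mult_left_mono)
  then show ?thesis
    by (simp add: lower_barrier_def algebra_simps)
qed

lemma lower_barrier_deviation_bounded:
  assumes "\<delta> \<ge> 0" "\<epsilon> \<ge> 0" "0 \<le> t" "t \<le> 2"
  shows "lower_barrier m b \<delta> \<alpha> \<epsilon> (x, t) - (m * x + \<delta> * \<bar>x + \<alpha>\<bar>) \<le> 2 * \<bar>b\<bar> + \<delta> * (2 * \<bar>\<alpha>\<bar> + sqrt (\<epsilon> * exp 1))"
proof -
  have "\<bar>smooth_cone \<alpha> \<epsilon> (1 / 2) (x, t) - \<bar>x + \<alpha>\<bar>\<bar> \<le> 2 * \<bar>\<alpha>\<bar> + sqrt (\<epsilon> * exp 1)"
    using smooth_cone_minus_abs_bounded[of \<epsilon> t 2 \<alpha> "1 / 2" x] assms by (simp add: mult.commute)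
  then have "\<bar>\<delta> * (smooth_cone \<alpha> \<epsilon> (1 / 2) (x, t) - \<bar>x + \<alpha>\<bar>)\<bar> \<le> \<delta> * (2 * \<bar>\<alpha>\<bar> + sqrt (\<epsilon> * exp 1))"
    using assms(1) by (simp add: abs_mult mult_left_mono)
  moreover have "\<bar>b * t\<bar> \<le> 2 * \<bar>b\<bar>"
    using mult_left_mono[of t 2 "\<bar>b\<bar>"] assms(3,4) by (simp add: abs_mult mult.commute)
  moreover have "0 \<le> \<delta> * sqrt \<epsilon> / 3 * (2 + exp (t / 4))"
    using assms(1,2) by (simp add: add_pos_pos)
  ultimately show ?thesis
    unfolding lower_barrier_def abs_le_iff by (simp add: algebra_simps)
qed

lemma viscous_solution_ge_lower_barrier:
  assumes lin: "\<forall>p\<in>{m - 2 * \<delta><..<m + 2 * \<delta>}. F p = \<alpha> * p + \<beta>"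
    and sol: "visc_solution \<epsilon> F (\<lambda>x. m * x + \<delta> * \<bar>x + \<alpha>\<bar>) u"
    and "\<delta> > 0" "\<epsilon> > 0" "\<gamma> > 0"
  shows "lower_barrier m (- F m - \<gamma>) \<delta> \<alpha> \<epsilon> (0, 1) \<le> u (0, 1)"
proof -
  define b where "b = - F m - \<gamma>"
  obtain \<rho> where \<rho>: "0 < \<rho>" "\<rho> < \<delta>" "(\<bar>\<alpha>\<bar> + \<epsilon>) * \<rho> < \<gamma>"
    using small_perturbation_bound[OF \<open>\<delta> > 0\<close> \<open>\<gamma> > 0\<close>, of "\<bar>\<alpha>\<bar> + \<epsilon>"] \<open>\<epsilon> > 0\<close> by auto
  obtain C where C: "\<And>x t. 0 \<le> t \<Longrightarrow> t \<le> 2 \<Longrightarrow> \<bar>u (x, t) - (m * x + \<delta> * \<bar>x + \<alpha>\<bar>)\<bar> \<le> C"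
    using visc_solution_deviation_bounded[OF sol, of 2] by auto
  have "- u (0, 1) \<le> - lower_barrier m b \<delta> \<alpha> \<epsilon> (0, 1)"
  proof (rule comparison_with_strict_supersolution[OF _ visc_solution_imp_uminus_subsolution[OF sol]
        test_fun_uminus[OF test_fun_lower_barrier[OF \<open>\<epsilon> > 0\<close>]] \<open>\<rho> > 0\<close>,
        where T = 2 and B = "C + 2 * \<bar>b\<bar> + \<delta> * (2 * \<bar>\<alpha>\<bar> + sqrt (\<epsilon> * exp 1))"])
    show "continuous_on (UNIV \<times> {0..}) (\<lambda>p. - u p)"
      using sol by (intro continuous_intros) (simp add: visc_solution_def)
  next
    fix p :: "real \<times> real" and d e s :: real
    assume "0 < snd p" "snd p < 2" "\<bar>d\<bar> \<le> \<rho>" "\<bar>e\<bar> \<le> \<rho>" "0 \<le> s"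
    define q where "q = smooth_cone_dx \<alpha> \<epsilon> (1 / 2) p"
    have "\<bar>q\<bar> \<le> 1"
      using abs_smooth_cone_dx_le_1 \<open>\<epsilon> > 0\<close> by (simp add: q_def)
    then have F_slope: "F (m + \<delta> * q + - d) = F m + \<alpha> * (\<delta> * q + - d)"
      by (rule affine_at_perturbed_slope[OF lin]) (use \<rho> \<open>\<bar>d\<bar> \<le> \<rho>\<close> in simp)
    have arg: "- (- (m + \<delta> * q) + d) = m + \<delta> * q + - d"
      by simp
    have "\<bar>\<alpha>\<bar> * \<bar>d\<bar> \<le> \<bar>\<alpha>\<bar> * \<rho>" "\<epsilon> * \<bar>e\<bar> \<le> \<epsilon> * \<rho>"
      using \<open>\<bar>d\<bar> \<le> \<rho>\<close> \<open>\<bar>e\<bar> \<le> \<rho>\<close> \<open>\<epsilon> > 0\<close> by (simp_all add: mult_left_mono)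
    moreover have "\<bar>\<alpha> * d\<bar> + \<bar>\<epsilon> * e\<bar> = \<bar>\<alpha>\<bar> * \<bar>d\<bar> + \<epsilon> * \<bar>e\<bar>"
      using \<open>\<epsilon> > 0\<close> by (simp add: abs_mult)
    ultimately have "\<bar>\<alpha> * d\<bar> + \<bar>\<epsilon> * e\<bar> < \<gamma>"
      using \<rho>(3) by (simp add: algebra_simps)
    moreover have "\<delta> * (smooth_cone_dt \<alpha> \<epsilon> (1 / 2) p + \<alpha> * q - sqrt \<epsilon> / 12 * exp (snd p / 4)
        - \<epsilon> * smooth_cone_dxx \<alpha> \<epsilon> (1 / 2) p) \<le> 0"
      using smooth_cone_viscous_subsolution[OF \<open>\<epsilon> > 0\<close> \<open>snd p < 2\<close>, of \<alpha>] \<open>\<delta> > 0\<close>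
      by (simp add: q_def mult_nonneg_nonpos)
    ultimately show "0 < - (b + \<delta> * smooth_cone_dt \<alpha> \<epsilon> (1 / 2) p - \<delta> * sqrt \<epsilon> / 12 * exp (snd p / 4)) + s
        - F (- (- (m + \<delta> * smooth_cone_dx \<alpha> \<epsilon> (1 / 2) p) + d))
        - \<epsilon> * (- (\<delta> * smooth_cone_dxx \<alpha> \<epsilon> (1 / 2) p) + e)"
      unfolding q_def[symmetric] arg F_slope using \<open>0 \<le> s\<close> abs_ge_minus_self[of "\<alpha> * d"] abs_ge_self[of "\<epsilon> * e"]
      by (simp add: b_def algebra_simps)
  next
    fix x
    have "u (x, 0) = m * x + \<delta> * \<bar>x + \<alpha>\<bar>"
      using sol by (simp add: visc_solution_def)
    with lower_barrier_initial_le[of \<delta> \<epsilon> m b \<alpha> x] \<open>\<delta> > 0\<close> \<open>\<epsilon> > 0\<close>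
    show "- u (x, 0) \<le> - lower_barrier m b \<delta> \<alpha> \<epsilon> (x, 0)"
      by simp
  next
    fix x t :: real
    assume "0 \<le> t" "t < 2"
    with C[of t x] lower_barrier_deviation_bounded[of \<delta> \<epsilon> t m b \<alpha> x] \<open>\<delta> > 0\<close> \<open>\<epsilon> > 0\<close>
    show "- u (x, t) - - lower_barrier m b \<delta> \<alpha> \<epsilon> (x, t) \<le> C + 2 * \<bar>b\<bar> + \<delta> * (2 * \<bar>\<alpha>\<bar> + sqrt (\<epsilon> * exp 1))"
      by (simp add: abs_le_iff)
  qed simp_all
  then show ?thesis
    by (simp add: b_def)
qed

lemma viscous_solution_lower_bound:
  assumes "\<forall>p\<in>{m - 2 * \<delta><..<m + 2 * \<delta>}. F p = \<alpha> * p + \<beta>"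
    and "visc_solution \<epsilon> F (\<lambda>x. m * x + \<delta> * \<bar>x + \<alpha>\<bar>) u" "\<delta> > 0" "\<epsilon> > 0"
  shows "- F m + 2 / 3 * \<delta> * (exp (1 / 4) - 1) * sqrt \<epsilon> \<le> u (0, 1)"
proof (rule field_le_epsilon)
  fix \<gamma> :: real
  assume "\<gamma> > 0"
  have "exp (1 / 2 :: real) = exp (1 / 4) ^ 2"
    by (simp add: power2_eq_square flip: exp_add)
  then have "sqrt (exp (1 / 2 :: real)) = exp (1 / 4)"
    by simp
  then have "lower_barrier m (- F m - \<gamma>) \<delta> \<alpha> \<epsilon> (0, 1)
      = - F m + 2 / 3 * \<delta> * (exp (1 / 4) - 1) * sqrt \<epsilon> - \<gamma>"
    by (simp add: lower_barrier_def smooth_cone_def real_sqrt_mult algebra_simps)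
  with viscous_solution_ge_lower_barrier[OF assms \<open>\<gamma> > 0\<close>]
  show "- F m + 2 / 3 * \<delta> * (exp (1 / 4) - 1) * sqrt \<epsilon> \<le> u (0, 1) + \<gamma>"
    by simp
qed

theorem corollary1p4:
  fixes F :: "real \<Rightarrow> real" and a b :: real
  assumes "locally_lipschitz F"
    and "a < b"
    and "\<exists>\<alpha> \<beta>. \<forall>p\<in>{a<..<b}. F p = \<alpha> * p + \<beta>"
  shows "\<exists>(g :: real \<Rightarrow> real) c0. (\<exists>L. L-lipschitz_on UNIV g) \<and> c0 > 0 \<and>
           (\<forall>\<epsilon> u\<epsilon> u. 0 < \<epsilon> \<and> \<epsilon> < 1/4 \<and> visc_solution \<epsilon> F g u\<epsilon> \<and> visc_solution 0 F g u
              \<longrightarrow> \<bar>u\<epsilon> (0, 1) - u (0, 1)\<bar> \<ge> c0 * sqrt \<epsilon>)"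
proof -
  (* Only the affinity of F on (a, b) is used. *)
  obtain \<alpha> \<beta> where lin: "\<forall>p\<in>{a<..<b}. F p = \<alpha> * p + \<beta>"
    using assms(3) by blast
  define m where "m = (a + b) / 2"
  define \<delta> where "\<delta> = (b - a) / 4"
  have "\<delta> > 0" "m - 2 * \<delta> = a" "m + 2 * \<delta> = b"
    using assms(2) by (simp_all add: m_def \<delta>_def field_simps)
  with lin have lin': "\<forall>p\<in>{m - 2 * \<delta><..<m + 2 * \<delta>}. F p = \<alpha> * p + \<beta>"
    by simp
  have "(\<bar>m\<bar> * 1 + \<bar>\<delta>\<bar> * 1)-lipschitz_on UNIV (\<lambda>x. m * x + \<delta> * \<bar>x + \<alpha>\<bar>)"
    by (intro lipschitz_on_add lipschitz_on_cmult_real lipschitz_on_id lipschitz_onI)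
      (simp_all add: dist_real_def abs_triangle_ineq3[of "_ + \<alpha>", simplified])
  moreover have "0 < 2 / 3 * \<delta> * (exp (1 / 4) - 1)"
    using \<open>\<delta> > 0\<close> by simp
  moreover have "2 / 3 * \<delta> * (exp (1 / 4) - 1) * sqrt \<epsilon> \<le> \<bar>u\<epsilon> (0, 1) - u (0, 1)\<bar>"
    if "0 < \<epsilon>" "visc_solution \<epsilon> F (\<lambda>x. m * x + \<delta> * \<bar>x + \<alpha>\<bar>) u\<epsilon>"
      "visc_solution 0 F (\<lambda>x. m * x + \<delta> * \<bar>x + \<alpha>\<bar>) u" for \<epsilon> u\<epsilon> u
    using viscous_solution_lower_bound[OF lin' that(2) \<open>\<delta> > 0\<close> that(1)]
      inviscid_solution_upper_bound[OF lin' that(3) \<open>\<delta> > 0\<close>]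
    by linarith
  ultimately show ?thesis
    by blast
qed

end
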